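(* Assume the standing assumptions below (no LICQ assumption on the subproblems). Let a KKT point of the expanded problem $E$ be given, with primal variables and multipliers $\gamma_i=(\gamma_{0,i};\dots;\gamma_{N_i,i};\gamma_{tc,i})$ for the constraints of block $i<p$, multipliers $\lambda_p$ for block $p$, and $\hat\lambda_{-1},\dots,\hat\lambda_{p-1}$ for the coupling constraints. For $i=0,\dots,p-1$ set $$w_i=-(\gamma_{tc,i}+\hat\lambda_i),\qquad \lambda_i=\gamma_i+Z_iw_i,\qquad Z_i=\begin{bmatrix}-\mathcal A_i&-D_i&I\end{bmatrix}^T$$ (i.e. $\lambda_{0,i}=\gamma_{0,i}-\mathcal A_i^Tw_i$, $\lambda_{j+1,i}=\gamma_{j+1,i}-D_{j,i}^Tw_i$ for $j=0,\dots,N_i-1$, $\lambda_{tc,i}=\gamma_{tc,i}+w_i$). Then $w_i\in\ker(S_i^T)$, the same primal variables together with the multipliers $\lambda_0,\dots,\lambda_{p-1},\lambda_p,\hat\lambda$ again form a KKT point of $E$ (in particular $\lambda_i$ is an optimal multiplier vector of block $i$'s constraints), and $$\lambda_{tc,i}=-\hat\lambda_i,\qquad \lambda_{0,i}=\hat\lambda_{i-1},\qquad \lambda_{N_i,i}=\hat\lambda_i,\qquad i=0,\dots,p-1.$$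
   Context: Problem $\mathrm{MPC}_N$ ($N\ge2$): variables $x_0,\dots,x_N\in\mathbb R^{n_x}$, $u_t\in\mathbb R^{n_{u,t}}$; minimize $\sum_{t=0}^{N-1}\big(\tfrac12[x_t;u_t]^TH_t[x_t;u_t]+f_t^T[x_t;u_t]+c_t\big)+\tfrac12x_N^TH_Nx_N+f_N^Tx_N+c_N$ s.t. $x_0=\bar x$, $x_{t+1}=A_tx_t+B_tu_t+a_t$. Standing assumptions: $H_t$ symmetric positive semidefinite with lower-right block $H_{u,t}$ positive definite, $H_N$ positive semidefinite, LICQ holds. Splitting: integer $1\le p<N$, $N_0,\dots,N_p\ge1$ with $\sum N_i=N$, $\tau_i=\sum_{j<i}N_j$; block data $A_{t,i}=A_{\tau_i+t}$, etc. (same for $B,a,H,f,c$), $t=0,\dots,N_i-1$, and $H_{N_p,p}=H_N$, $f_{N_p,p}=f_N$, $c_{N_p,p}=c_N$. Products $\prod_{t=t_0}^{t_1}A_t=A_{t_1}\cdots A_{t_0}$ (empty $=I$). For $i<p$: $\mathcal A_i=\prod_{t=0}^{N_i-1}A_{t,i}$, $D_{j,i}=\prod_{s=j+1}^{N_i-1}A_{s,i}$, $D_i=[D_{0,i}\cdots D_{N_i-1,i}]$, $S_i=[D_{0,i}B_{0,i}\cdots D_{N_i-1,i}B_{N_i-1,i}]$, $\mathbf a_i=(a_{0,i};\dots;a_{N_i-1,i})$, $T_i$ a matrix whose columns form a basis of the range of $S_i$. Expanded problem $E$: variables $x_{t,i},u_{t,i}$ (all blocks $i=0,\dots,p$), $\bar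 x_0,\dots,\bar x_p$, $\bar d_0,\dots,\bar d_{p-1}$; objective $\sum_{i=0}^p\sum_{t=0}^{N_i-1}\big(\tfrac12[x_{t,i};u_{t,i}]^TH_{t,i}[x_{t,i};u_{t,i}]+f_{t,i}^T[x_{t,i};u_{t,i}]+c_{t,i}\big)+\tfrac12x_{N_p,p}^TH_{N_p,p}x_{N_p,p}+f_{N_p,p}^Tx_{N_p,p}+c_{N_p,p}$; constraints with multipliers: $x_{0,i}=\bar x_i$ ($\lambda_{0,i}$), $x_{t+1,i}=A_{t,i}x_{t,i}+B_{t,i}u_{t,i}+a_{t,i}$ ($\lambda_{t+1,i}$), for $i<p$: $x_{N_i,i}=\mathcal A_i\bar x_i+T_i\bar d_i+D_i\mathbf a_i$ ($\lambda_{tc,i}$); $\bar x_0=\bar x$ ($\hat\lambda_{-1}$); $\bar x_{i+1}=\mathcal A_i\bar x_i+T_i\bar d_i+D_i\mathbf a_i$, $i=0,\dots,p-1$ ($\hat\lambda_i$). Sign convention: for each constraint written $\ell=r$ (left side as displayed) with multiplier $\mu$, the Lagrangian is objective $+\sum\mu^T(r-\ell)$ and stationarity is vanishing of its gradient with respect to all variables. *)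

theory Defs
  imports Complex_Main "Jordan_Normal_Form.Matrix"
begin

record mpc =
  nx :: nat
  nu :: "nat \<Rightarrow> nat"
  hor :: nat
  Am :: "nat \<Rightarrow> real mat"
  Bm :: "nat \<Rightarrow> real mat"
  av :: "nat \<Rightarrow> real vec"
  Hm :: "nat \<Rightarrow> real mat"
  fv :: "nat \<Rightarrow> real vec"
  cs :: "nat \<Rightarrow> real"
  HN :: "real mat"
  fN :: "real vec"
  cN :: real
  xbar :: "real vec"

definition psd_mat :: "nat \<Rightarrow> real mat \<Rightarrow> bool" where
  "psd_mat n M \<longleftrightarrow> M \<in> carrier_mat n n \<and> (\<forall>v. dim_vec v = n \<longrightarrow> v \<bullet> (M *\<^sub>v v) \<ge> 0)"

definition pd_mat :: "nat \<Rightarrow> real mat \<Rightarrow> bool" where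
  "pd_mat n M \<longleftrightarrow> M \<in> carrier_mat n n \<and>
     (\<forall>v. dim_vec v = n \<longrightarrow> v \<noteq> 0\<^sub>v n \<longrightarrow> v \<bullet> (M *\<^sub>v v) > 0)"

definition lower_right :: "nat \<Rightarrow> nat \<Rightarrow> real mat \<Rightarrow> real mat" where
  "lower_right k m M = mat m m (\<lambda>(r, c). M $$ (k + r, k + c))"

definition mpc_wf :: "mpc \<Rightarrow> bool" where
  "mpc_wf P \<longleftrightarrow>
     (\<forall>t < hor P.
        Am P t \<in> carrier_mat (nx P) (nx P) \<and>
        Bm P t \<in> carrier_mat (nx P) (nu P t) \<and>
        dim_vec (av P t) = nx P \<and>
        Hm P t \<in> carrier_mat (nx P + nu P t) (nx P + nu P t) \<and>
        dim_vec (fv P t) = nx P + nu P t) \<and>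
     HN P \<in> carrier_mat (nx P) (nx P) \<and> dim_vec (fN P) = nx P \<and> dim_vec (xbar P) = nx P"

text \<open>LICQ for the equality constraints of MPC_N: the Jacobian of the constraint map
  (x,u) |-> (x_0 - xbar, x_{t+1} - A_t x_t - B_t u_t - a_t) has full row rank,
  i.e. the linear constraint map is onto.\<close>
definition mpc_LICQ :: "mpc \<Rightarrow> bool" where
  "mpc_LICQ P \<longleftrightarrow>
     (\<forall>e :: nat \<Rightarrow> real vec. (\<forall>t \<le> hor P. dim_vec (e t) = nx P) \<longrightarrow>
        (\<exists>X U. (\<forall>t \<le> hor P. dim_vec (X t) = nx P) \<and> (\<forall>t < hor P. dim_vec (U t) = nu P t) \<and>
               X 0 = e 0 \<and>
               (\<forall>t < hor P. X (Suc t) - (Am P t *\<^sub>v X t + Bm P t *\<^sub>v U t) = e (Suc t))))"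

definition mpc_standing :: "mpc \<Rightarrow> bool" where
  "mpc_standing P \<longleftrightarrow> hor P \<ge> 2 \<and> mpc_wf P \<and>
     (\<forall>t < hor P. (Hm P t)\<^sup>T = Hm P t \<and> psd_mat (nx P + nu P t) (Hm P t) \<and>
                  pd_mat (nu P t) (lower_right (nx P) (nu P t) (Hm P t))) \<and>
     psd_mat (nx P) (HN P) \<and> mpc_LICQ P"

text \<open>Ns i = N_i, i = 0..p; tau Ns i = sum of N_j for j < i.\<close>
definition tau :: "(nat \<Rightarrow> nat) \<Rightarrow> nat \<Rightarrow> nat" where
  "tau Ns i = (\<Sum>j<i. Ns j)"

definition valid_split :: "mpc \<Rightarrow> nat \<Rightarrow> (nat \<Rightarrow> nat) \<Rightarrow> bool" where
  "valid_split P p Ns \<longleftrightarrow> 1 \<le> p \<and> p < hor P \<and> (\<forall>i \<le> p. Ns i \<ge> 1) \<and> (\<Sum>i\<le>p. Ns i) = hor P"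

text \<open>Ordered product  prod_{t=lo}^{hi-1} F t = F (hi-1) * ... * F lo  (empty = identity).\<close>
definition mprod :: "nat \<Rightarrow> (nat \<Rightarrow> real mat) \<Rightarrow> nat \<Rightarrow> nat \<Rightarrow> real mat" where
  "mprod n F lo hi = foldl (\<lambda>M t. F t * M) (1\<^sub>m n) [lo..<hi]"

fun hcat :: "nat \<Rightarrow> real mat list \<Rightarrow> real mat" where
  "hcat n [] = 0\<^sub>m n 0"
| "hcat n (M # Ms) = four_block_mat M (hcat n Ms) (0\<^sub>m 0 (dim_col M)) (0\<^sub>m 0 (dim_col (hcat n Ms)))"

definition vstack :: "real vec list \<Rightarrow> real vec" where
  "vstack vs = foldr (@\<^sub>v) vs (0\<^sub>v 0)"

definition Ab :: "mpc \<Rightarrow> (nat \<Rightarrow> nat) \<Rightarrow> nat \<Rightarrow> nat \<Rightarrow> real mat" where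
  "Ab P Ns i t = Am P (tau Ns i + t)"
definition Bb :: "mpc \<Rightarrow> (nat \<Rightarrow> nat) \<Rightarrow> nat \<Rightarrow> nat \<Rightarrow> real mat" where
  "Bb P Ns i t = Bm P (tau Ns i + t)"
definition ab :: "mpc \<Rightarrow> (nat \<Rightarrow> nat) \<Rightarrow> nat \<Rightarrow> nat \<Rightarrow> real vec" where
  "ab P Ns i t = av P (tau Ns i + t)"
definition Hb :: "mpc \<Rightarrow> (nat \<Rightarrow> nat) \<Rightarrow> nat \<Rightarrow> nat \<Rightarrow> real mat" where
  "Hb P Ns i t = Hm P (tau Ns i + t)"
definition fb :: "mpc \<Rightarrow> (nat \<Rightarrow> nat) \<Rightarrow> nat \<Rightarrow> nat \<Rightarrow> real vec" where
  "fb P Ns i t = fv P (tau Ns i + t)"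
definition cb :: "mpc \<Rightarrow> (nat \<Rightarrow> nat) \<Rightarrow> nat \<Rightarrow> nat \<Rightarrow> real" where
  "cb P Ns i t = cs P (tau Ns i + t)"
definition nub :: "mpc \<Rightarrow> (nat \<Rightarrow> nat) \<Rightarrow> nat \<Rightarrow> nat \<Rightarrow> nat" where
  "nub P Ns i t = nu P (tau Ns i + t)"

definition calA :: "mpc \<Rightarrow> (nat \<Rightarrow> nat) \<Rightarrow> nat \<Rightarrow> real mat" where
  "calA P Ns i = mprod (nx P) (Ab P Ns i) 0 (Ns i)"
definition Dji :: "mpc \<Rightarrow> (nat \<Rightarrow> nat) \<Rightarrow> nat \<Rightarrow> nat \<Rightarrow> real mat" where
  "Dji P Ns i j = mprod (nx P) (Ab P Ns i) (Suc j) (Ns i)"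
definition Dm :: "mpc \<Rightarrow> (nat \<Rightarrow> nat) \<Rightarrow> nat \<Rightarrow> real mat" where
  "Dm P Ns i = hcat (nx P) (map (Dji P Ns i) [0..<Ns i])"
definition Sm :: "mpc \<Rightarrow> (nat \<Rightarrow> nat) \<Rightarrow> nat \<Rightarrow> real mat" where
  "Sm P Ns i = hcat (nx P) (map (\<lambda>j. Dji P Ns i j * Bb P Ns i j) [0..<Ns i])"
definition abold :: "mpc \<Rightarrow> (nat \<Rightarrow> nat) \<Rightarrow> nat \<Rightarrow> real vec" where
  "abold P Ns i = vstack (map (ab P Ns i) [0..<Ns i])"

definition col_basis_of_range :: "real mat \<Rightarrow> real mat \<Rightarrow> bool" where
  "col_basis_of_range T S \<longleftrightarrow> dim_row T = dim_row S \<and>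
     (\<forall>v. dim_vec v = dim_col T \<longrightarrow> T *\<^sub>v v = 0\<^sub>v (dim_row T) \<longrightarrow> v = 0\<^sub>v (dim_col T)) \<and>
     {T *\<^sub>v v | v. dim_vec v = dim_col T} = {S *\<^sub>v v | v. dim_vec v = dim_col S}"

definition rhs :: "mpc \<Rightarrow> (nat \<Rightarrow> nat) \<Rightarrow> (nat \<Rightarrow> real mat) \<Rightarrow> nat \<Rightarrow> real vec \<Rightarrow> real vec \<Rightarrow> real vec" where
  "rhs P Ns T i xb db = calA P Ns i *\<^sub>v xb + T i *\<^sub>v db + Dm P Ns i *\<^sub>v abold P Ns i"

text \<open>Primal variables: X t i = x_{t,i} (t \<le> N_i), U t i = u_{t,i} (t < N_i), Xb i = xbar_i (i \<le> p),
  Db i = dbar_i (i < p).  Multipliers: Lam k i = lambda_{k,i} (k \<le> N_i, i \<le> p),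
  Ltc i = lambda_{tc,i} (i < p), Lhat k = hat-lambda_{k-1} (k = 0..p).\<close>

definition objE :: "mpc \<Rightarrow> nat \<Rightarrow> (nat \<Rightarrow> nat) \<Rightarrow> (nat \<Rightarrow> nat \<Rightarrow> real vec) \<Rightarrow> (nat \<Rightarrow> nat \<Rightarrow> real vec) \<Rightarrow> real" where
  "objE P p Ns X U =
     (\<Sum>i\<le>p. \<Sum>t<Ns i. (1/2) * ((X t i @\<^sub>v U t i) \<bullet> (Hb P Ns i t *\<^sub>v (X t i @\<^sub>v U t i)))
                       + fb P Ns i t \<bullet> (X t i @\<^sub>v U t i) + cb P Ns i t)
     + (1/2) * (X (Ns p) p \<bullet> (HN P *\<^sub>v X (Ns p) p)) + fN P \<bullet> X (Ns p) p + cN P"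

definition LagE :: "mpc \<Rightarrow> nat \<Rightarrow> (nat \<Rightarrow> nat) \<Rightarrow> (nat \<Rightarrow> real mat) \<Rightarrow>
    (nat \<Rightarrow> nat \<Rightarrow> real vec) \<Rightarrow> (nat \<Rightarrow> nat \<Rightarrow> real vec) \<Rightarrow> (nat \<Rightarrow> real vec) \<Rightarrow> (nat \<Rightarrow> real vec) \<Rightarrow>
    (nat \<Rightarrow> nat \<Rightarrow> real vec) \<Rightarrow> (nat \<Rightarrow> real vec) \<Rightarrow> (nat \<Rightarrow> real vec) \<Rightarrow> real" where
  "LagE P p Ns T X U Xb Db Lam Ltc Lhat =
     objE P p Ns X U
     + (\<Sum>i\<le>p. Lam 0 i \<bullet> (Xb i - X 0 i))
     + (\<Sum>i\<le>p. \<Sum>t<Ns i. Lam (Suc t) i \<bullet>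
          ((Ab P Ns i t *\<^sub>v X t i + Bb P Ns i t *\<^sub>v U t i + ab P Ns i t) - X (Suc t) i))
     + (\<Sum>i<p. Ltc i \<bullet> (rhs P Ns T i (Xb i) (Db i) - X (Ns i) i))
     + Lhat 0 \<bullet> (xbar P - Xb 0)
     + (\<Sum>i<p. Lhat (Suc i) \<bullet> (rhs P Ns T i (Xb i) (Db i) - Xb (Suc i)))"

definition primal_dims :: "mpc \<Rightarrow> nat \<Rightarrow> (nat \<Rightarrow> nat) \<Rightarrow> (nat \<Rightarrow> real mat) \<Rightarrow>
    (nat \<Rightarrow> nat \<Rightarrow> real vec) \<Rightarrow> (nat \<Rightarrow> nat \<Rightarrow> real vec) \<Rightarrow> (nat \<Rightarrow> real vec) \<Rightarrow> (nat \<Rightarrow> real vec) \<Rightarrow> bool" where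
  "primal_dims P p Ns T X U Xb Db \<longleftrightarrow>
     (\<forall>i\<le>p. \<forall>t\<le>Ns i. dim_vec (X t i) = nx P) \<and>
     (\<forall>i\<le>p. \<forall>t<Ns i. dim_vec (U t i) = nub P Ns i t) \<and>
     (\<forall>i\<le>p. dim_vec (Xb i) = nx P) \<and>
     (\<forall>i<p. dim_vec (Db i) = dim_col (T i))"

definition dual_dims :: "mpc \<Rightarrow> nat \<Rightarrow> (nat \<Rightarrow> nat) \<Rightarrow>
    (nat \<Rightarrow> nat \<Rightarrow> real vec) \<Rightarrow> (nat \<Rightarrow> real vec) \<Rightarrow> (nat \<Rightarrow> real vec) \<Rightarrow> bool" where
  "dual_dims P p Ns Lam Ltc Lhat \<longleftrightarrow>
     (\<forall>i\<le>p. \<forall>k\<le>Ns i. dim_vec (Lam k i) = nx P) \<and>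
     (\<forall>i<p. dim_vec (Ltc i) = nx P) \<and>
     (\<forall>k\<le>p. dim_vec (Lhat k) = nx P)"

definition feasibleE :: "mpc \<Rightarrow> nat \<Rightarrow> (nat \<Rightarrow> nat) \<Rightarrow> (nat \<Rightarrow> real mat) \<Rightarrow>
    (nat \<Rightarrow> nat \<Rightarrow> real vec) \<Rightarrow> (nat \<Rightarrow> nat \<Rightarrow> real vec) \<Rightarrow> (nat \<Rightarrow> real vec) \<Rightarrow> (nat \<Rightarrow> real vec) \<Rightarrow> bool" where
  "feasibleE P p Ns T X U Xb Db \<longleftrightarrow>
     (\<forall>i\<le>p. X 0 i = Xb i) \<and>
     (\<forall>i\<le>p. \<forall>t<Ns i. X (Suc t) i = Ab P Ns i t *\<^sub>v X t i + Bb P Ns i t *\<^sub>v U t i + ab P Ns i t) \<and>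
     (\<forall>i<p. X (Ns i) i = rhs P Ns T i (Xb i) (Db i)) \<and>
     Xb 0 = xbar P \<and>
     (\<forall>i<p. Xb (Suc i) = rhs P Ns T i (Xb i) (Db i))"

text \<open>Stationarity: the gradient of the Lagrangian w.r.t. all primal variables vanishes,
  i.e. every directional derivative (in every dimension-compatible direction) is zero.\<close>
definition stationaryE :: "mpc \<Rightarrow> nat \<Rightarrow> (nat \<Rightarrow> nat) \<Rightarrow> (nat \<Rightarrow> real mat) \<Rightarrow>
    (nat \<Rightarrow> nat \<Rightarrow> real vec) \<Rightarrow> (nat \<Rightarrow> nat \<Rightarrow> real vec) \<Rightarrow> (nat \<Rightarrow> real vec) \<Rightarrow> (nat \<Rightarrow> real vec) \<Rightarrow>
    (nat \<Rightarrow> nat \<Rightarrow> real vec) \<Rightarrow> (nat \<Rightarrow> real vec) \<Rightarrow> (nat \<Rightarrow> real vec) \<Rightarrow> bool" where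
  "stationaryE P p Ns T X U Xb Db Lam Ltc Lhat \<longleftrightarrow>
     (\<forall>dX dU dXb dDb. primal_dims P p Ns T dX dU dXb dDb \<longrightarrow>
        ((\<lambda>s. LagE P p Ns T (\<lambda>t i. X t i + s \<cdot>\<^sub>v dX t i) (\<lambda>t i. U t i + s \<cdot>\<^sub>v dU t i)
                           (\<lambda>i. Xb i + s \<cdot>\<^sub>v dXb i) (\<lambda>i. Db i + s \<cdot>\<^sub>v dDb i) Lam Ltc Lhat)
          has_real_derivative 0) (at 0))"

definition KKT_E :: "mpc \<Rightarrow> nat \<Rightarrow> (nat \<Rightarrow> nat) \<Rightarrow> (nat \<Rightarrow> real mat) \<Rightarrow>
    (nat \<Rightarrow> nat \<Rightarrow> real vec) \<Rightarrow> (nat \<Rightarrow> nat \<Rightarrow> real vec) \<Rightarrow> (nat \<Rightarrow> real vec) \<Rightarrow> (nat \<Rightarrow> real vec) \<Rightarrow>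
    (nat \<Rightarrow> nat \<Rightarrow> real vec) \<Rightarrow> (nat \<Rightarrow> real vec) \<Rightarrow> (nat \<Rightarrow> real vec) \<Rightarrow> bool" where
  "KKT_E P p Ns T X U Xb Db Lam Ltc Lhat \<longleftrightarrow>
     primal_dims P p Ns T X U Xb Db \<and> dual_dims P p Ns Lam Ltc Lhat \<and>
     feasibleE P p Ns T X U Xb Db \<and> stationaryE P p Ns T X U Xb Db Lam Ltc Lhat"

end

theory Submission
  imports Defs
begin

text \<open>Stationarity of the Lagrangian of E in directions that leave the objective unchanged
  yields three identities for each block i < p: the direction of dbar_i gives
  T_i^T (gamma_tc,i + lambdahat_i) = 0, so w_i is orthogonal to range T_i = range S_i; the
  directions of xbar_i and of x_{N_i,i}, together with D_{N_i-1,i} = I, give the identities for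
  lambda_{0,i} and lambda_{N_i,i}.  For the KKT property, the terms added by the shift Z_i w_i
  telescope along the dynamics of block i to w_i^T (T_i ddbar_i + S_i du_i) = 0, so every
  directional derivative of the Lagrangian is unchanged.\<close>

lemma vec_eq_by_scalar_prod:
  fixes a b :: "real vec"
  assumes "dim_vec a = n" "dim_vec b = n" and h: "\<And>d. dim_vec d = n \<Longrightarrow> a \<bullet> d = b \<bullet> d"
  shows "a = b"
proof (rule eq_vecI)
  show "dim_vec a = dim_vec b" using assms by simp
  fix k assume k: "k < dim_vec b"
  have ac: "a \<in> carrier_vec n" "b \<in> carrier_vec n" using assms by (auto intro: carrier_vecI)
  have "a \<bullet> unit_vec n k = b \<bullet> unit_vec n k" by (rule h) simp
  then show "a $ k = b $ k" using ac k assms by simp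
qed

lemma scalar_prod_zero_vec_right [simp]: "(l :: real vec) \<bullet> 0\<^sub>v n = 0"
  by (simp add: scalar_prod_def)

lemma mult_mat_vec_zero_vec [simp]: "(A :: real mat) *\<^sub>v 0\<^sub>v n = 0\<^sub>v (dim_row A)"
  by (rule eq_vecI) (auto simp: scalar_prod_def)

lemma add_smult_zero_vec: "dim_vec (x :: real vec) = n \<Longrightarrow> x + s \<cdot>\<^sub>v 0\<^sub>v n = x"
  by (rule eq_vecI) auto

lemma scalar_prod_add_diff_distrib:
  fixes l a b c :: "real vec"
  assumes "dim_vec l = n" "dim_vec a = n" "dim_vec b = n" "dim_vec c = n"
  shows "l \<bullet> ((a + b) - c) = l \<bullet> a + l \<bullet> b - l \<bullet> c"
  unfolding scalar_prod_def using assms by (simp add: algebra_simps sum.distrib sum_subtractf)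

lemma scalar_prod_uminus_add_left:
  fixes a b c :: "real vec"
  assumes "dim_vec a = n" "dim_vec b = n" "dim_vec c = n"
  shows "(- (a + b)) \<bullet> c = - (a \<bullet> c) - b \<bullet> c"
proof -
  have "(- (a + b)) \<bullet> c = (\<Sum>i\<in>{0..<n}. - (a $ i * c $ i) - b $ i * c $ i)"
    unfolding scalar_prod_def using assms by (intro sum.cong) (auto simp: algebra_simps)
  also have "\<dots> = - (a \<bullet> c) - b \<bullet> c"
    unfolding scalar_prod_def using assms by (simp add: sum_subtractf sum_negf)
  finally show ?thesis .
qed

lemma scalar_prod_shifted_diff:
  fixes l x y dx dy :: "real vec"
  assumes "dim_vec l = n" "dim_vec x = n" "dim_vec y = n" "dim_vec dx = n" "dim_vec dy = n"
  shows "l \<bullet> ((x + s \<cdot>\<^sub>v dx) - (y + s \<cdot>\<^sub>v dy)) = l \<bullet> (x - y) + s * (l \<bullet> (dx - dy))"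
proof -
  have "(x + s \<cdot>\<^sub>v dx) - (y + s \<cdot>\<^sub>v dy) = (x - y) + s \<cdot>\<^sub>v (dx - dy)"
    by (rule eq_vecI) (use assms in \<open>auto simp: algebra_simps\<close>)
  moreover have "l \<in> carrier_vec n" "x - y \<in> carrier_vec n" "s \<cdot>\<^sub>v (dx - dy) \<in> carrier_vec n"
    using assms by (auto intro: carrier_vecI)
  ultimately show ?thesis by (simp add: scalar_prod_add_distrib[of _ n])
qed

lemma scalar_prod_shifted_right_diff:
  fixes l x y dy :: "real vec"
  assumes "dim_vec l = n" "dim_vec x = n" "dim_vec y = n" "dim_vec dy = n"
  shows "l \<bullet> (x - (y + s \<cdot>\<^sub>v dy)) = l \<bullet> (x - y) + s * (l \<bullet> (0\<^sub>v n - dy))"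
  using scalar_prod_shifted_diff[of l n x y "0\<^sub>v n" dy s] assms add_smult_zero_vec[of x n s]
  by simp

lemma scalar_prod_shifted_affine_diff:
  fixes l x y dx dy a u du :: "real vec" and A B :: "real mat"
  assumes A: "A \<in> carrier_mat n n" and B: "B \<in> carrier_mat n m"
    and "dim_vec l = n" "dim_vec x = n" "dim_vec y = n" "dim_vec dx = n" "dim_vec dy = n"
    "dim_vec a = n" "dim_vec u = m" "dim_vec du = m"
  shows "l \<bullet> ((A *\<^sub>v (x + s \<cdot>\<^sub>v dx) + B *\<^sub>v (u + s \<cdot>\<^sub>v du) + a) - (y + s \<cdot>\<^sub>v dy))
       = l \<bullet> ((A *\<^sub>v x + B *\<^sub>v u + a) - y) + s * (l \<bullet> ((A *\<^sub>v dx + B *\<^sub>v du) - dy))"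
proof -
  have c: "x \<in> carrier_vec n" "dx \<in> carrier_vec n" "u \<in> carrier_vec m" "du \<in> carrier_vec m"
    using assms by (auto intro: carrier_vecI)
  have "A *\<^sub>v (x + s \<cdot>\<^sub>v dx) = A *\<^sub>v x + s \<cdot>\<^sub>v (A *\<^sub>v dx)"
    using c by (simp add: mult_add_distrib_mat_vec[OF A] mult_mat_vec[OF A])
  moreover have "B *\<^sub>v (u + s \<cdot>\<^sub>v du) = B *\<^sub>v u + s \<cdot>\<^sub>v (B *\<^sub>v du)"
    using c by (simp add: mult_add_distrib_mat_vec[OF B] mult_mat_vec[OF B])
  ultimately have "A *\<^sub>v (x + s \<cdot>\<^sub>v dx) + B *\<^sub>v (u + s \<cdot>\<^sub>v du) + a
      = (A *\<^sub>v x + B *\<^sub>v u + a) + s \<cdot>\<^sub>v (A *\<^sub>v dx + B *\<^sub>v du)"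
    using assms by (intro eq_vecI) (auto simp: algebra_simps)
  then show ?thesis
    using scalar_prod_shifted_diff[of l n "A *\<^sub>v x + B *\<^sub>v u + a" y "A *\<^sub>v dx + B *\<^sub>v du" dy s] assms
    by simp
qed

lemma dim_vstack: "dim_vec (vstack vs) = sum_list (map dim_vec vs)"
  unfolding vstack_def by (induction vs) auto

lemma vstack_Cons: "vstack (v # vs) = v @\<^sub>v vstack vs"
  unfolding vstack_def by simp

lemma dim_row_hcat_Cons: "dim_row (hcat n (M # Ms)) = dim_row M"
  by (simp only: hcat.simps index_mat_four_block(2,3)) simp

lemma dim_col_hcat_Cons: "dim_col (hcat n (M # Ms)) = dim_col M + dim_col (hcat n Ms)"
  by (simp only: hcat.simps index_mat_four_block(2,3)) simp

declare hcat.simps(2)[simp del]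

lemma hcat_carrier:
  assumes "\<forall>M\<in>set Ms. dim_row M = n"
  shows "hcat n Ms \<in> carrier_mat n (sum_list (map dim_col Ms))"
  using assms
proof (induction Ms)
  case Nil then show ?case by simp
next
  case (Cons M Ms)
  then have "hcat n Ms \<in> carrier_mat n (sum_list (map dim_col Ms))" by simp
  then show ?case using Cons.prems by (auto simp: dim_row_hcat_Cons dim_col_hcat_Cons)
qed

lemma hcat_Cons_mult_append:
  fixes M :: "real mat"
  assumes M: "M \<in> carrier_mat n k" and H: "hcat n Ms \<in> carrier_mat n c"
    and a: "a \<in> carrier_vec k" and b: "b \<in> carrier_vec c"
  shows "hcat n (M # Ms) *\<^sub>v (a @\<^sub>v b) = M *\<^sub>v a + hcat n Ms *\<^sub>v b"
proof (rule eq_vecI)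
  fix i assume "i < dim_vec (M *\<^sub>v a + hcat n Ms *\<^sub>v b)"
  then have i: "i < n" using M H by simp
  have "row (hcat n (M # Ms)) i = row M i @\<^sub>v row (hcat n Ms) i"
    unfolding hcat.simps(2) using M H
    by (intro row_four_block_mat(1)[OF M H]) (use i in auto)
  then have "(hcat n (M # Ms) *\<^sub>v (a @\<^sub>v b)) $ i = (row M i @\<^sub>v row (hcat n Ms) i) \<bullet> (a @\<^sub>v b)"
    using i M by (simp add: dim_row_hcat_Cons)
  also have "\<dots> = row M i \<bullet> a + row (hcat n Ms) i \<bullet> b"
    by (rule scalar_prod_append[of _ k _ c]) (use M H a b i in auto)
  finally show "(hcat n (M # Ms) *\<^sub>v (a @\<^sub>v b)) $ i = (M *\<^sub>v a + hcat n Ms *\<^sub>v b) $ i"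
    using i M H by simp
qed (use M H in \<open>auto simp: dim_row_hcat_Cons\<close>)

lemma scalar_prod_hcat_vstack:
  fixes u :: "real vec"
  assumes "length vs = length Ms" "\<forall>k<length Ms. Ms ! k \<in> carrier_mat n (dim_vec (vs ! k))"
    and u: "u \<in> carrier_vec n"
  shows "u \<bullet> (hcat n Ms *\<^sub>v vstack vs) = (\<Sum>k<length Ms. u \<bullet> (Ms ! k *\<^sub>v vs ! k))"
  using assms(1,2)
proof (induction vs Ms rule: list_induct2)
  case Nil
  then show ?case using u by (simp add: vstack_def scalar_prod_def)
next
  case (Cons v vs M Ms)
  have M: "M \<in> carrier_mat n (dim_vec v)" using Cons.prems by force
  have all: "\<forall>k<length Ms. Ms ! k \<in> carrier_mat n (dim_vec (vs ! k))" using Cons.prems by force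
  have "map dim_col Ms = map dim_vec vs"
    by (rule nth_equalityI) (use all Cons.hyps in auto)
  moreover have "hcat n Ms \<in> carrier_mat n (sum_list (map dim_col Ms))"
    by (rule hcat_carrier) (use all in \<open>metis carrier_matD(1) in_set_conv_nth\<close>)
  ultimately have H: "hcat n Ms \<in> carrier_mat n (dim_vec (vstack vs))"
    by (simp add: dim_vstack)
  have "u \<bullet> (hcat n (M # Ms) *\<^sub>v vstack (v # vs)) = u \<bullet> (M *\<^sub>v v + hcat n Ms *\<^sub>v vstack vs)"
    unfolding vstack_Cons by (subst hcat_Cons_mult_append[OF M H]) auto
  also have "\<dots> = u \<bullet> (M *\<^sub>v v) + u \<bullet> (hcat n Ms *\<^sub>v vstack vs)"
    using H M u by (intro scalar_prod_add_distrib[of _ n]) auto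
  also have "\<dots> = (\<Sum>k<length (M # Ms). u \<bullet> ((M # Ms) ! k *\<^sub>v (v # vs) ! k))"
    using Cons.IH[OF all] unfolding length_Cons sum.lessThan_Suc_shift by simp
  finally show ?case .
qed

section \<open>Ordered matrix products\<close>

lemma mprod_empty: "hi \<le> lo \<Longrightarrow> mprod n F lo hi = 1\<^sub>m n"
  unfolding mprod_def by simp

lemma mprod_Suc: "lo \<le> hi \<Longrightarrow> mprod n F lo (Suc hi) = F hi * mprod n F lo hi"
  unfolding mprod_def by simp

lemma mprod_carrier:
  assumes "\<And>t. lo \<le> t \<Longrightarrow> t < hi \<Longrightarrow> F t \<in> carrier_mat n n"
  shows "mprod n F lo hi \<in> carrier_mat n n"
  using assms
proof (induction hi)
  case 0 then show ?case by (simp add: mprod_empty)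
next
  case (Suc hi)
  then show ?case by (cases "lo \<le> hi") (auto simp: mprod_Suc mprod_empty intro!: mult_carrier_mat)
qed

lemma mprod_split_first:
  assumes "lo < hi" and F: "\<And>t. lo \<le> t \<Longrightarrow> t < hi \<Longrightarrow> F t \<in> carrier_mat n n"
  shows "mprod n F lo hi = mprod n F (Suc lo) hi * F lo"
  using assms
proof (induction hi)
  case 0 then show ?case by simp
next
  case (Suc hi)
  show ?case
  proof (cases "lo = hi")
    case True
    have "F hi \<in> carrier_mat n n" using Suc.prems True by auto
    then show ?thesis using True by (simp add: mprod_Suc mprod_empty)
  next
    case False
    then have lt: "lo < hi" using Suc.prems by simp
    have c: "mprod n F (Suc lo) hi \<in> carrier_mat n n" by (rule mprod_carrier) (use Suc.prems in auto)
    have "mprod n F lo (Suc hi) = F hi * (mprod n F (Suc lo) hi * F lo)"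
      using Suc.IH[OF lt] Suc.prems lt by (simp add: mprod_Suc)
    also have "\<dots> = (F hi * mprod n F (Suc lo) hi) * F lo"
      using c Suc.prems lt by (subst assoc_mult_mat[of _ n n _ n _ n]) auto
    also have "\<dots> = mprod n F (Suc lo) (Suc hi) * F lo" using lt by (simp add: mprod_Suc)
    finally show ?thesis .
  qed
qed

lemma transition_defects_telescope:
  fixes A :: "nat \<Rightarrow> real mat" and x e :: "nat \<Rightarrow> real vec" and w :: "real vec"
  assumes A: "\<And>t. t < N \<Longrightarrow> A t \<in> carrier_mat n n"
    and x: "\<And>t. t \<le> N \<Longrightarrow> dim_vec (x t) = n"
    and e: "\<And>t. t < N \<Longrightarrow> dim_vec (e t) = n"
    and w: "dim_vec w = n"
  shows "(\<Sum>t<N. ((mprod n A (Suc t) N)\<^sup>T *\<^sub>v w) \<bullet> ((A t *\<^sub>v x t + e t) - x (Suc t)))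
       = w \<bullet> (mprod n A 0 N *\<^sub>v x 0) - w \<bullet> x N + (\<Sum>t<N. w \<bullet> (mprod n A (Suc t) N *\<^sub>v e t))"
proof -
  define g where "g t = w \<bullet> (mprod n A t N *\<^sub>v x t)" for t
  have \<Phi>: "\<And>t. mprod n A t N \<in> carrier_mat n n" by (rule mprod_carrier, rule A) auto
  have adj: "((mprod n A (Suc t) N)\<^sup>T *\<^sub>v w) \<bullet> v = w \<bullet> (mprod n A (Suc t) N *\<^sub>v v)"
    if "dim_vec v = n" for t v
    using that w by (intro transpose_vec_mult_scalar[OF \<Phi>]) (auto intro: carrier_vecI)
  have step: "((mprod n A (Suc t) N)\<^sup>T *\<^sub>v w) \<bullet> ((A t *\<^sub>v x t + e t) - x (Suc t))
      = (g t - g (Suc t)) + w \<bullet> (mprod n A (Suc t) N *\<^sub>v e t)" if t: "t < N" for t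
  proof -
    have At: "A t \<in> carrier_mat n n" using A t by auto
    have dAx: "dim_vec (A t *\<^sub>v x t) = n" using At by simp
    have de: "dim_vec (e t) = n" and dx: "dim_vec (x (Suc t)) = n" using x e t by auto
    have "mprod n A t N = mprod n A (Suc t) N * A t" by (rule mprod_split_first) (use t A in auto)
    moreover have "x t \<in> carrier_vec n" using x t by (auto intro: carrier_vecI)
    ultimately have "mprod n A t N *\<^sub>v x t = mprod n A (Suc t) N *\<^sub>v (A t *\<^sub>v x t)"
      using assoc_mult_mat_vec[OF \<Phi> At] by simp
    then have "g t = w \<bullet> (mprod n A (Suc t) N *\<^sub>v (A t *\<^sub>v x t))" by (simp add: g_def)
    moreover have "((mprod n A (Suc t) N)\<^sup>T *\<^sub>v w) \<bullet> ((A t *\<^sub>v x t + e t) - x (Suc t))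
      = ((mprod n A (Suc t) N)\<^sup>T *\<^sub>v w) \<bullet> (A t *\<^sub>v x t) + ((mprod n A (Suc t) N)\<^sup>T *\<^sub>v w) \<bullet> e t
        - ((mprod n A (Suc t) N)\<^sup>T *\<^sub>v w) \<bullet> x (Suc t)"
      using \<Phi>[of "Suc t"] by (intro scalar_prod_add_diff_distrib[OF _ dAx de dx]) simp
    ultimately show ?thesis unfolding adj[OF dAx] adj[OF de] adj[OF dx] g_def by linarith
  qed
  have "(\<Sum>t<N. ((mprod n A (Suc t) N)\<^sup>T *\<^sub>v w) \<bullet> ((A t *\<^sub>v x t + e t) - x (Suc t)))
      = (\<Sum>t<N. g t - g (Suc t)) + (\<Sum>t<N. w \<bullet> (mprod n A (Suc t) N *\<^sub>v e t))"
    unfolding sum.distrib[symmetric] by (rule sum.cong[OF refl], rule step) simp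
  also have "(\<Sum>t<N. g t - g (Suc t)) = g 0 - g N" by (rule sum_lessThan_telescope')
  also have "g N = w \<bullet> x N"
  proof -
    have "x N \<in> carrier_vec n" using x[of N] by (auto intro: carrier_vecI)
    then show ?thesis by (simp add: g_def mprod_empty)
  qed
  finally show ?thesis by (simp only: g_def)
qed

lemma tau_add_less_hor:
  assumes "valid_split P p Ns" "i \<le> p" "t < Ns i"
  shows "tau Ns i + t < hor P"
proof -
  have "tau Ns i + Ns i = sum Ns {..<Suc i}" unfolding tau_def by simp
  also have "\<dots> \<le> sum Ns {..p}" by (rule sum_mono2) (use assms in auto)
  also have "\<dots> = hor P" using assms(1) unfolding valid_split_def by simp
  finally show ?thesis using assms by simp
qed

lemma block_data_dims:
  assumes "mpc_wf P" "valid_split P p Ns" "i \<le> p" "t < Ns i"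
  shows "Ab P Ns i t \<in> carrier_mat (nx P) (nx P)"
    and "Bb P Ns i t \<in> carrier_mat (nx P) (nub P Ns i t)"
    and "dim_vec (ab P Ns i t) = nx P"
  using assms(1) tau_add_less_hor[OF assms(2-4)]
  unfolding mpc_wf_def Ab_def Bb_def ab_def nub_def by blast+

lemma Dji_carrier:
  assumes "mpc_wf P" "valid_split P p Ns" "i \<le> p"
  shows "Dji P Ns i j \<in> carrier_mat (nx P) (nx P)"
  unfolding Dji_def using block_data_dims(1)[OF assms] by (intro mprod_carrier) auto

lemma calA_carrier:
  assumes "mpc_wf P" "valid_split P p Ns" "i \<le> p"
  shows "calA P Ns i \<in> carrier_mat (nx P) (nx P)"
  unfolding calA_def using block_data_dims(1)[OF assms] by (intro mprod_carrier) auto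

lemma Sm_carrier:
  assumes "mpc_wf P" "valid_split P p Ns" "i \<le> p"
  shows "Sm P Ns i \<in> carrier_mat (nx P) (dim_col (Sm P Ns i))"
proof -
  have "Sm P Ns i \<in> carrier_mat (nx P) (sum_list (map dim_col (map (\<lambda>j. Dji P Ns i j * Bb P Ns i j) [0..<Ns i])))"
    unfolding Sm_def using Dji_carrier[OF assms] by (intro hcat_carrier) auto
  then show ?thesis by (metis carrier_matD(1) carrier_matI)
qed

lemma dim_row_Dm:
  assumes "mpc_wf P" "valid_split P p Ns" "i \<le> p"
  shows "dim_row (Dm P Ns i) = nx P"
proof -
  have "Dm P Ns i \<in> carrier_mat (nx P) (sum_list (map dim_col (map (Dji P Ns i) [0..<Ns i])))"
    unfolding Dm_def using Dji_carrier[OF assms] by (intro hcat_carrier) auto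
  then show ?thesis by (metis carrier_matD(1))
qed

definition split_data_dims :: "mpc \<Rightarrow> nat \<Rightarrow> (nat \<Rightarrow> nat) \<Rightarrow> (nat \<Rightarrow> real mat) \<Rightarrow> bool" where
  "split_data_dims P p Ns T \<longleftrightarrow>
   (\<forall>i\<le>p. \<forall>t<Ns i. Ab P Ns i t \<in> carrier_mat (nx P) (nx P) \<and> Bb P Ns i t \<in> carrier_mat (nx P) (nub P Ns i t)
       \<and> dim_vec (ab P Ns i t) = nx P) \<and>
   (\<forall>i<p. calA P Ns i \<in> carrier_mat (nx P) (nx P) \<and> T i \<in> carrier_mat (nx P) (dim_col (T i))
       \<and> dim_vec (Dm P Ns i *\<^sub>v abold P Ns i) = nx P) \<and> dim_vec (xbar P) = nx P"

lemma split_data_dimsI: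
  assumes wf: "mpc_wf P" and split: "valid_split P p Ns"
    and Tbasis: "\<forall>i<p. col_basis_of_range (T i) (Sm P Ns i)"
  shows "split_data_dims P p Ns T"
proof -
  have T: "T i \<in> carrier_mat (nx P) (dim_col (T i))" if i: "i < p" for i
  proof -
    have "dim_row (T i) = dim_row (Sm P Ns i)" using Tbasis i unfolding col_basis_of_range_def by blast
    then show ?thesis using Sm_carrier[OF wf split, of i] i by (metis carrier_matD(1) carrier_matI less_imp_le)
  qed
  have "dim_vec (xbar P) = nx P" using wf unfolding mpc_wf_def by blast
  then show ?thesis
    unfolding split_data_dims_def
    using block_data_dims[OF wf split] calA_carrier[OF wf split] dim_row_Dm[OF wf split] T by auto
qed

section \<open>Linearisation of the Lagrangian\<close>

text \<open>The constraint part of \<open>LagE\<close> is affine in the primal variables; \<open>LagE_lin\<close> is its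
  linear part, evaluated at the direction \<open>(dX, dU, dXb, dDb)\<close>.\<close>

definition LagE_lin :: "mpc \<Rightarrow> nat \<Rightarrow> (nat \<Rightarrow> nat) \<Rightarrow> (nat \<Rightarrow> real mat) \<Rightarrow>
    (nat \<Rightarrow> nat \<Rightarrow> real vec) \<Rightarrow> (nat \<Rightarrow> nat \<Rightarrow> real vec) \<Rightarrow> (nat \<Rightarrow> real vec) \<Rightarrow> (nat \<Rightarrow> real vec) \<Rightarrow>
    (nat \<Rightarrow> nat \<Rightarrow> real vec) \<Rightarrow> (nat \<Rightarrow> real vec) \<Rightarrow> (nat \<Rightarrow> real vec) \<Rightarrow> real" where
  "LagE_lin P p Ns T dX dU dXb dDb Lam Ltc Lhat =
     (\<Sum>i\<le>p. Lam 0 i \<bullet> (dXb i - dX 0 i))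
     + (\<Sum>i\<le>p. \<Sum>t<Ns i. Lam (Suc t) i \<bullet>
          ((Ab P Ns i t *\<^sub>v dX t i + Bb P Ns i t *\<^sub>v dU t i) - dX (Suc t) i))
     + (\<Sum>i<p. Ltc i \<bullet> ((calA P Ns i *\<^sub>v dXb i + T i *\<^sub>v dDb i) - dX (Ns i) i))
     + Lhat 0 \<bullet> (0\<^sub>v (nx P) - dXb 0)
     + (\<Sum>i<p. Lhat (Suc i) \<bullet> ((calA P Ns i *\<^sub>v dXb i + T i *\<^sub>v dDb i) - dXb (Suc i)))"

lemma sum_affine_cong:
  fixes f g h :: "'b \<Rightarrow> real"
  assumes "\<And>i. i \<in> A \<Longrightarrow> f i = g i + s * h i"
  shows "sum f A = sum g A + s * sum h A"
  using assms by (simp add: sum.distrib sum_distrib_left)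

lemma LagE_shift:
  assumes D: "split_data_dims P p Ns T" and Z: "primal_dims P p Ns T X U Xb Db"
    and dZ: "primal_dims P p Ns T dX dU dXb dDb" and L: "dual_dims P p Ns Lam Ltc Lhat"
  shows "LagE P p Ns T (\<lambda>t i. X t i + s \<cdot>\<^sub>v dX t i) (\<lambda>t i. U t i + s \<cdot>\<^sub>v dU t i)
            (\<lambda>i. Xb i + s \<cdot>\<^sub>v dXb i) (\<lambda>i. Db i + s \<cdot>\<^sub>v dDb i) Lam Ltc Lhat
       = objE P p Ns (\<lambda>t i. X t i + s \<cdot>\<^sub>v dX t i) (\<lambda>t i. U t i + s \<cdot>\<^sub>v dU t i)
         + (LagE P p Ns T X U Xb Db Lam Ltc Lhat - objE P p Ns X U)
         + s * LagE_lin P p Ns T dX dU dXb dDb Lam Ltc Lhat"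
proof -
  let ?n = "nx P"
  note Dd = D[unfolded split_data_dims_def]
  note Zd = Z[unfolded primal_dims_def]
  note dZd = dZ[unfolded primal_dims_def]
  note Ld = L[unfolded dual_dims_def]
  have t1: "(\<Sum>i\<le>p. Lam 0 i \<bullet> ((Xb i + s \<cdot>\<^sub>v dXb i) - (X 0 i + s \<cdot>\<^sub>v dX 0 i)))
     = (\<Sum>i\<le>p. Lam 0 i \<bullet> (Xb i - X 0 i)) + s * (\<Sum>i\<le>p. Lam 0 i \<bullet> (dXb i - dX 0 i))"
    by (rule sum_affine_cong, rule scalar_prod_shifted_diff[of _ ?n]) (use Zd dZd Ld in auto)
  have t2: "(\<Sum>i\<le>p. \<Sum>t<Ns i. Lam (Suc t) i \<bullet>
          ((Ab P Ns i t *\<^sub>v (X t i + s \<cdot>\<^sub>v dX t i) + Bb P Ns i t *\<^sub>v (U t i + s \<cdot>\<^sub>v dU t i) + ab P Ns i t)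
             - (X (Suc t) i + s \<cdot>\<^sub>v dX (Suc t) i)))
     = (\<Sum>i\<le>p. \<Sum>t<Ns i. Lam (Suc t) i \<bullet>
          ((Ab P Ns i t *\<^sub>v X t i + Bb P Ns i t *\<^sub>v U t i + ab P Ns i t) - X (Suc t) i))
       + s * (\<Sum>i\<le>p. \<Sum>t<Ns i. Lam (Suc t) i \<bullet>
          ((Ab P Ns i t *\<^sub>v dX t i + Bb P Ns i t *\<^sub>v dU t i) - dX (Suc t) i))"
    by (rule sum_affine_cong, rule sum_affine_cong,
        rule scalar_prod_shifted_affine_diff[of _ ?n _ "nub P Ns _ _"]) (use Zd dZd Ld Dd in auto)
  have t3: "(\<Sum>i<p. Ltc i \<bullet> (rhs P Ns T i (Xb i + s \<cdot>\<^sub>v dXb i) (Db i + s \<cdot>\<^sub>v dDb i) - (X (Ns i) i + s \<cdot>\<^sub>v dX (Ns i) i)))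
     = (\<Sum>i<p. Ltc i \<bullet> (rhs P Ns T i (Xb i) (Db i) - X (Ns i) i))
       + s * (\<Sum>i<p. Ltc i \<bullet> ((calA P Ns i *\<^sub>v dXb i + T i *\<^sub>v dDb i) - dX (Ns i) i))"
    unfolding rhs_def
    by (rule sum_affine_cong, rule scalar_prod_shifted_affine_diff[of _ ?n _ "dim_col (T _)"])
      (use Zd dZd Ld Dd in auto)
  have t4: "Lhat 0 \<bullet> (xbar P - (Xb 0 + s \<cdot>\<^sub>v dXb 0))
      = Lhat 0 \<bullet> (xbar P - Xb 0) + s * (Lhat 0 \<bullet> (0\<^sub>v ?n - dXb 0))"
    by (rule scalar_prod_shifted_right_diff[of _ ?n]) (use Zd dZd Ld Dd in auto)
  have t5: "(\<Sum>i<p. Lhat (Suc i) \<bullet> (rhs P Ns T i (Xb i + s \<cdot>\<^sub>v dXb i) (Db i + s \<cdot>\<^sub>v dDb i) - (Xb (Suc i) + s \<cdot>\<^sub>v dXb (Suc i))))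
     = (\<Sum>i<p. Lhat (Suc i) \<bullet> (rhs P Ns T i (Xb i) (Db i) - Xb (Suc i)))
       + s * (\<Sum>i<p. Lhat (Suc i) \<bullet> ((calA P Ns i *\<^sub>v dXb i + T i *\<^sub>v dDb i) - dXb (Suc i)))"
    unfolding rhs_def
    by (rule sum_affine_cong, rule scalar_prod_shifted_affine_diff[of _ ?n _ "dim_col (T _)"])
      (use Zd dZd Ld Dd in auto)
  show ?thesis
    unfolding LagE_def LagE_lin_def t1 t2 t3 t4 t5 by (simp add: algebra_simps)
qed

lemma LagE_lin_expand:
  assumes D: "split_data_dims P p Ns T"
    and dZ: "primal_dims P p Ns T dX dU dXb dDb" and L: "dual_dims P p Ns Lam Ltc Lhat"
  shows "LagE_lin P p Ns T dX dU dXb dDb Lam Ltc Lhat =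
     (\<Sum>i\<le>p. Lam 0 i \<bullet> dXb i - Lam 0 i \<bullet> dX 0 i)
     + (\<Sum>i\<le>p. \<Sum>t<Ns i. Lam (Suc t) i \<bullet> (Ab P Ns i t *\<^sub>v dX t i) + Lam (Suc t) i \<bullet> (Bb P Ns i t *\<^sub>v dU t i)
             - Lam (Suc t) i \<bullet> dX (Suc t) i)
     + (\<Sum>i<p. Ltc i \<bullet> (calA P Ns i *\<^sub>v dXb i) + Ltc i \<bullet> (T i *\<^sub>v dDb i) - Ltc i \<bullet> dX (Ns i) i)
     - Lhat 0 \<bullet> dXb 0
     + (\<Sum>i<p. Lhat (Suc i) \<bullet> (calA P Ns i *\<^sub>v dXb i) + Lhat (Suc i) \<bullet> (T i *\<^sub>v dDb i) - Lhat (Suc i) \<bullet> dXb (Suc i))"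
proof -
  let ?n = "nx P"
  note Dd = D[unfolded split_data_dims_def]
  note dZd = dZ[unfolded primal_dims_def]
  note Ld = L[unfolded dual_dims_def]
  have rows: "dim_row (Ab P Ns i t) = ?n" "dim_row (Bb P Ns i t) = ?n" if "i \<le> p" "t < Ns i" for i t
    using Dd that by (blast dest: carrier_matD)+
  have rows2: "dim_row (calA P Ns i) = ?n" "dim_row (T i) = ?n" if "i < p" for i
    using Dd that by (blast dest: carrier_matD)+
  have t1: "(\<Sum>i\<le>p. Lam 0 i \<bullet> (dXb i - dX 0 i)) = (\<Sum>i\<le>p. Lam 0 i \<bullet> dXb i - Lam 0 i \<bullet> dX 0 i)"
    by (rule sum.cong[OF refl], rule scalar_prod_minus_distrib[of _ ?n]) (use dZd Ld in \<open>auto intro: carrier_vecI\<close>)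
  have t2: "(\<Sum>i\<le>p. \<Sum>t<Ns i. Lam (Suc t) i \<bullet> ((Ab P Ns i t *\<^sub>v dX t i + Bb P Ns i t *\<^sub>v dU t i) - dX (Suc t) i))
     = (\<Sum>i\<le>p. \<Sum>t<Ns i. Lam (Suc t) i \<bullet> (Ab P Ns i t *\<^sub>v dX t i) + Lam (Suc t) i \<bullet> (Bb P Ns i t *\<^sub>v dU t i)
             - Lam (Suc t) i \<bullet> dX (Suc t) i)"
    by (rule sum.cong[OF refl], rule sum.cong[OF refl], rule scalar_prod_add_diff_distrib[of _ ?n])
      (use dZd Ld rows in auto)
  have t3: "(\<Sum>i<p. Ltc i \<bullet> ((calA P Ns i *\<^sub>v dXb i + T i *\<^sub>v dDb i) - dX (Ns i) i))
     = (\<Sum>i<p. Ltc i \<bullet> (calA P Ns i *\<^sub>v dXb i) + Ltc i \<bullet> (T i *\<^sub>v dDb i) - Ltc i \<bullet> dX (Ns i) i)"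
    by (rule sum.cong[OF refl], rule scalar_prod_add_diff_distrib[of _ ?n]) (use dZd Ld rows2 in auto)
  have t4: "Lhat 0 \<bullet> (0\<^sub>v ?n - dXb 0) = - (Lhat 0 \<bullet> dXb 0)"
  proof -
    have "Lhat 0 \<in> carrier_vec ?n" "dXb 0 \<in> carrier_vec ?n" using dZd Ld by (auto intro: carrier_vecI)
    then show ?thesis by (simp add: scalar_prod_minus_distrib[of _ ?n])
  qed
  have t5: "(\<Sum>i<p. Lhat (Suc i) \<bullet> ((calA P Ns i *\<^sub>v dXb i + T i *\<^sub>v dDb i) - dXb (Suc i)))
     = (\<Sum>i<p. Lhat (Suc i) \<bullet> (calA P Ns i *\<^sub>v dXb i) + Lhat (Suc i) \<bullet> (T i *\<^sub>v dDb i) - Lhat (Suc i) \<bullet> dXb (Suc i))"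
    by (rule sum.cong[OF refl], rule scalar_prod_add_diff_distrib[of _ ?n]) (use dZd Ld rows2 in auto)
  show ?thesis unfolding LagE_lin_def t1 t2 t3 t4 t5 by simp
qed

lemma objE_cong:
  assumes "\<And>i t. i \<le> p \<Longrightarrow> t < Ns i \<Longrightarrow> X' t i = X t i"
    and "\<And>i t. i \<le> p \<Longrightarrow> t < Ns i \<Longrightarrow> U' t i = U t i"
    and "X' (Ns p) p = X (Ns p) p"
  shows "objE P p Ns X' U' = objE P p Ns X U"
proof -
  have "(\<Sum>i\<le>p. \<Sum>t<Ns i. (1/2) * ((X' t i @\<^sub>v U' t i) \<bullet> (Hb P Ns i t *\<^sub>v (X' t i @\<^sub>v U' t i)))
                       + fb P Ns i t \<bullet> (X' t i @\<^sub>v U' t i) + cb P Ns i t)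
      = (\<Sum>i\<le>p. \<Sum>t<Ns i. (1/2) * ((X t i @\<^sub>v U t i) \<bullet> (Hb P Ns i t *\<^sub>v (X t i @\<^sub>v U t i)))
                       + fb P Ns i t \<bullet> (X t i @\<^sub>v U t i) + cb P Ns i t)"
    by (rule sum.cong[OF refl], rule sum.cong[OF refl]) (simp add: assms)
  then show ?thesis unfolding objE_def using assms(3) by simp
qed

lemma affine_derivative_0_imp_slope_0:
  fixes K b :: real
  assumes "((\<lambda>s. K + s * b) has_real_derivative 0) (at 0)"
  shows "b = 0"
proof -
  have "((\<lambda>s. K + s * b) has_real_derivative b) (at 0)"
    by (auto intro!: derivative_eq_intros)
  then show ?thesis using DERIV_unique assms by blast
qed

lemma LagE_lin_eq_0:
  assumes D: "split_data_dims P p Ns T" and K: "KKT_E P p Ns T X U Xb Db Lam Ltc Lhat"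
    and dZ: "primal_dims P p Ns T dX dU dXb dDb"
    and dX: "\<And>i t. i \<le> p \<Longrightarrow> t < Ns i \<Longrightarrow> dX t i = 0\<^sub>v (nx P)" "dX (Ns p) p = 0\<^sub>v (nx P)"
    and dU: "\<And>i t. i \<le> p \<Longrightarrow> t < Ns i \<Longrightarrow> dU t i = 0\<^sub>v (nub P Ns i t)"
  shows "LagE_lin P p Ns T dX dU dXb dDb Lam Ltc Lhat = 0"
proof -
  have Z: "primal_dims P p Ns T X U Xb Db" and L: "dual_dims P p Ns Lam Ltc Lhat"
    and S: "stationaryE P p Ns T X U Xb Db Lam Ltc Lhat" using K unfolding KKT_E_def by auto
  have obj: "objE P p Ns (\<lambda>t i. X t i + s \<cdot>\<^sub>v dX t i) (\<lambda>t i. U t i + s \<cdot>\<^sub>v dU t i) = objE P p Ns X U" for s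
    by (rule objE_cong) (use Z dX dU in \<open>auto simp: primal_dims_def add_smult_zero_vec\<close>)
  have "((\<lambda>s. LagE P p Ns T (\<lambda>t i. X t i + s \<cdot>\<^sub>v dX t i) (\<lambda>t i. U t i + s \<cdot>\<^sub>v dU t i)
                           (\<lambda>i. Xb i + s \<cdot>\<^sub>v dXb i) (\<lambda>i. Db i + s \<cdot>\<^sub>v dDb i) Lam Ltc Lhat)
          has_real_derivative 0) (at 0)"
    using S dZ unfolding stationaryE_def by blast
  then have "((\<lambda>s. LagE P p Ns T X U Xb Db Lam Ltc Lhat + s * LagE_lin P p Ns T dX dU dXb dDb Lam Ltc Lhat)
          has_real_derivative 0) (at 0)"
    unfolding LagE_shift[OF D Z dZ L] obj by simp
  then show ?thesis by (rule affine_derivative_0_imp_slope_0)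
qed

lemma stationary_wrt_Db:
  assumes D: "split_data_dims P p Ns T" and K: "KKT_E P p Ns T X U Xb Db Lam Ltc Lhat"
    and i0: "i0 < p" and d: "dim_vec d = dim_col (T i0)"
  shows "Ltc i0 \<bullet> (T i0 *\<^sub>v d) + Lhat (Suc i0) \<bullet> (T i0 *\<^sub>v d) = 0"
proof -
  define dX :: "nat \<Rightarrow> nat \<Rightarrow> real vec" where "dX = (\<lambda>t i. 0\<^sub>v (nx P))"
  define dU :: "nat \<Rightarrow> nat \<Rightarrow> real vec" where "dU = (\<lambda>t i. 0\<^sub>v (nub P Ns i t))"
  define dXb :: "nat \<Rightarrow> real vec" where "dXb = (\<lambda>i. 0\<^sub>v (nx P))"
  define dDb :: "nat \<Rightarrow> real vec" where "dDb = (\<lambda>i. if i = i0 then d else 0\<^sub>v (dim_col (T i)))"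
  have L: "dual_dims P p Ns Lam Ltc Lhat" using K unfolding KKT_E_def by auto
  have dZ: "primal_dims P p Ns T dX dU dXb dDb"
    unfolding primal_dims_def dX_def dU_def dXb_def dDb_def using d by auto
  have "LagE_lin P p Ns T dX dU dXb dDb Lam Ltc Lhat = 0"
    by (rule LagE_lin_eq_0[OF D K dZ]) (simp_all add: dX_def dU_def)
  moreover have "LagE_lin P p Ns T dX dU dXb dDb Lam Ltc Lhat =
     (\<Sum>i<p. Ltc i \<bullet> (T i *\<^sub>v dDb i)) + (\<Sum>i<p. Lhat (Suc i) \<bullet> (T i *\<^sub>v dDb i))"
    unfolding LagE_lin_expand[OF D dZ L] by (simp add: dX_def dU_def dXb_def)
  moreover have "(\<Sum>i<p. Ltc i \<bullet> (T i *\<^sub>v dDb i)) = Ltc i0 \<bullet> (T i0 *\<^sub>v d)"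
    "(\<Sum>i<p. Lhat (Suc i) \<bullet> (T i *\<^sub>v dDb i)) = Lhat (Suc i0) \<bullet> (T i0 *\<^sub>v d)"
    using i0 by (simp_all add: dDb_def if_distrib[of "\<lambda>v. T _ *\<^sub>v v"] if_distrib[of "\<lambda>v. _ \<bullet> v"] cong: if_cong)
  ultimately show ?thesis by simp
qed

lemma stationary_wrt_Xb:
  assumes D: "split_data_dims P p Ns T" and K: "KKT_E P p Ns T X U Xb Db Lam Ltc Lhat"
    and i0: "i0 < p" and d: "dim_vec d = nx P"
  shows "Lam 0 i0 \<bullet> d + Ltc i0 \<bullet> (calA P Ns i0 *\<^sub>v d) + Lhat (Suc i0) \<bullet> (calA P Ns i0 *\<^sub>v d)
       = Lhat i0 \<bullet> d"
proof -
  define dX :: "nat \<Rightarrow> nat \<Rightarrow> real vec" where "dX = (\<lambda>t i. 0\<^sub>v (nx P))"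
  define dU :: "nat \<Rightarrow> nat \<Rightarrow> real vec" where "dU = (\<lambda>t i. 0\<^sub>v (nub P Ns i t))"
  define dXb :: "nat \<Rightarrow> real vec" where "dXb = (\<lambda>i. if i = i0 then d else 0\<^sub>v (nx P))"
  define dDb :: "nat \<Rightarrow> real vec" where "dDb = (\<lambda>i. 0\<^sub>v (dim_col (T i)))"
  have L: "dual_dims P p Ns Lam Ltc Lhat" using K unfolding KKT_E_def by auto
  have dZ: "primal_dims P p Ns T dX dU dXb dDb"
    unfolding primal_dims_def dX_def dU_def dXb_def dDb_def using d by auto
  have "LagE_lin P p Ns T dX dU dXb dDb Lam Ltc Lhat = 0"
    by (rule LagE_lin_eq_0[OF D K dZ]) (simp_all add: dX_def dU_def)
  moreover have "LagE_lin P p Ns T dX dU dXb dDb Lam Ltc Lhat =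
     (\<Sum>i\<le>p. Lam 0 i \<bullet> dXb i) + (\<Sum>i<p. Ltc i \<bullet> (calA P Ns i *\<^sub>v dXb i))
     - (Lhat 0 \<bullet> dXb 0 + (\<Sum>i<p. Lhat (Suc i) \<bullet> dXb (Suc i)))
     + (\<Sum>i<p. Lhat (Suc i) \<bullet> (calA P Ns i *\<^sub>v dXb i))"
    unfolding LagE_lin_expand[OF D dZ L] by (simp add: dX_def dU_def dDb_def sum_subtractf sum.distrib)
  moreover have "Lhat 0 \<bullet> dXb 0 + (\<Sum>i<p. Lhat (Suc i) \<bullet> dXb (Suc i)) = (\<Sum>k<Suc p. Lhat k \<bullet> dXb k)"
    by (simp only: sum.lessThan_Suc_shift)
  moreover have "(\<Sum>k<Suc p. Lhat k \<bullet> dXb k) = Lhat i0 \<bullet> d"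
    using i0 by (simp add: dXb_def if_distrib[of "\<lambda>v. _ \<bullet> v"] cong: if_cong)
  moreover have "(\<Sum>i\<le>p. Lam 0 i \<bullet> dXb i) = Lam 0 i0 \<bullet> d"
    "(\<Sum>i<p. Ltc i \<bullet> (calA P Ns i *\<^sub>v dXb i)) = Ltc i0 \<bullet> (calA P Ns i0 *\<^sub>v d)"
    "(\<Sum>i<p. Lhat (Suc i) \<bullet> (calA P Ns i *\<^sub>v dXb i)) = Lhat (Suc i0) \<bullet> (calA P Ns i0 *\<^sub>v d)"
    using i0 by (simp_all add: dXb_def if_distrib[of "\<lambda>v. calA P Ns _ *\<^sub>v v"] if_distrib[of "\<lambda>v. _ \<bullet> v"]
        cong: if_cong)
  ultimately show ?thesis by linarith
qed

lemma stationary_wrt_terminal_state: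
  assumes D: "split_data_dims P p Ns T" and K: "KKT_E P p Ns T X U Xb Db Lam Ltc Lhat"
    and i0: "i0 < p" and N: "Ns i0 \<ge> 1" and d: "dim_vec d = nx P"
  shows "Lam (Ns i0) i0 \<bullet> d + Ltc i0 \<bullet> d = 0"
proof -
  define dX :: "nat \<Rightarrow> nat \<Rightarrow> real vec" where "dX = (\<lambda>t i. if t = Ns i0 \<and> i = i0 then d else 0\<^sub>v (nx P))"
  define dU :: "nat \<Rightarrow> nat \<Rightarrow> real vec" where "dU = (\<lambda>t i. 0\<^sub>v (nub P Ns i t))"
  define dXb :: "nat \<Rightarrow> real vec" where "dXb = (\<lambda>i. 0\<^sub>v (nx P))"
  define dDb :: "nat \<Rightarrow> real vec" where "dDb = (\<lambda>i. 0\<^sub>v (dim_col (T i)))"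
  have L: "dual_dims P p Ns Lam Ltc Lhat" using K unfolding KKT_E_def by auto
  have dZ: "primal_dims P p Ns T dX dU dXb dDb"
    unfolding primal_dims_def dX_def dU_def dXb_def dDb_def using d by auto
  have dX0: "dX t i = 0\<^sub>v (nx P)" if "i \<le> p" "t < Ns i" for t i
    using that by (auto simp: dX_def)
  have "LagE_lin P p Ns T dX dU dXb dDb Lam Ltc Lhat = 0"
    by (rule LagE_lin_eq_0[OF D K dZ dX0]) (use i0 in \<open>simp_all add: dX_def dU_def\<close>)
  moreover have "LagE_lin P p Ns T dX dU dXb dDb Lam Ltc Lhat =
       - (\<Sum>i\<le>p. \<Sum>t<Ns i. Lam (Suc t) i \<bullet> dX (Suc t) i) - (\<Sum>i<p. Ltc i \<bullet> dX (Ns i) i)"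
  proof -
    have "(\<Sum>i\<le>p. Lam 0 i \<bullet> dXb i - Lam 0 i \<bullet> dX 0 i) = 0"
      using N by (auto simp: dXb_def dX_def intro!: sum.neutral)
    moreover have "(\<Sum>i\<le>p. \<Sum>t<Ns i. Lam (Suc t) i \<bullet> (Ab P Ns i t *\<^sub>v dX t i)
             + Lam (Suc t) i \<bullet> (Bb P Ns i t *\<^sub>v dU t i) - Lam (Suc t) i \<bullet> dX (Suc t) i)
        = - (\<Sum>i\<le>p. \<Sum>t<Ns i. Lam (Suc t) i \<bullet> dX (Suc t) i)"
      by (simp add: dX0 dU_def sum_negf)
    ultimately show ?thesis
      unfolding LagE_lin_expand[OF D dZ L] by (simp add: dXb_def dDb_def sum_negf)
  qed
  moreover have "(\<Sum>i<p. Ltc i \<bullet> dX (Ns i) i) = Ltc i0 \<bullet> d"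
  proof -
    have "\<And>i. (Ns i = Ns i0 \<and> i = i0) = (i = i0)" by auto
    then show ?thesis using i0 by (simp add: dX_def if_distrib[of "\<lambda>v. _ \<bullet> v"] cong: if_cong)
  qed
  moreover have "(\<Sum>t<Ns i. Lam (Suc t) i \<bullet> dX (Suc t) i) = (if i = i0 then Lam (Ns i0) i0 \<bullet> d else 0)"
    for i
  proof (cases "i = i0")
    case True
    have "(\<Sum>t<Ns i. Lam (Suc t) i \<bullet> dX (Suc t) i)
        = (\<Sum>t<Ns i. if t = Ns i0 - 1 then Lam (Ns i0) i0 \<bullet> d else 0)"
      by (rule sum.cong[OF refl]) (use True N in \<open>auto simp: dX_def\<close>)
    then show ?thesis using True N by simp
  qed (simp add: dX_def)
  then have "(\<Sum>i\<le>p. \<Sum>t<Ns i. Lam (Suc t) i \<bullet> dX (Suc t) i) = Lam (Ns i0) i0 \<bullet> d"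
    using i0 by simp
  ultimately show ?thesis by linarith
qed

section \<open>Shifting the multipliers of a block\<close>

lemma orthogonal_Sm_sum_eq_0:
  assumes cD: "\<And>j. Dji P Ns i j \<in> carrier_mat (nx P) (nx P)"
    and cB: "\<And>t. t < Ns i \<Longrightarrow> Bb P Ns i t \<in> carrier_mat (nx P) (nub P Ns i t)"
    and du: "\<And>t. t < Ns i \<Longrightarrow> dim_vec (du t) = nub P Ns i t"
    and w: "dim_vec w = nx P"
    and Sw: "\<And>v. dim_vec v = dim_col (Sm P Ns i) \<Longrightarrow> w \<bullet> (Sm P Ns i *\<^sub>v v) = 0"
  shows "(\<Sum>t<Ns i. w \<bullet> (Dji P Ns i t *\<^sub>v (Bb P Ns i t *\<^sub>v du t))) = 0"
proof -
  define Ms where "Ms = map (\<lambda>j. Dji P Ns i j * Bb P Ns i j) [0..<Ns i]"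
  define vs where "vs = map du [0..<Ns i]"
  have len: "length vs = length Ms" "length Ms = Ns i" unfolding Ms_def vs_def by auto
  have Mk: "\<forall>k<length Ms. Ms ! k \<in> carrier_mat (nx P) (dim_vec (vs ! k))"
    using cD cB du by (auto simp: Ms_def vs_def intro!: mult_carrier_mat)
  have "w \<bullet> (hcat (nx P) Ms *\<^sub>v vstack vs) = (\<Sum>k<length Ms. w \<bullet> (Ms ! k *\<^sub>v vs ! k))"
    using w by (intro scalar_prod_hcat_vstack[OF len(1) Mk] carrier_vecI)
  also have "\<dots> = (\<Sum>t<Ns i. w \<bullet> (Dji P Ns i t *\<^sub>v (Bb P Ns i t *\<^sub>v du t)))"
    unfolding len(2)
  proof (rule sum.cong[OF refl])
    fix t assume "t \<in> {..<Ns i}"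
    then have t: "t < Ns i" by simp
    have "du t \<in> carrier_vec (nub P Ns i t)" using du[OF t] by (rule carrier_vecI)
    then show "w \<bullet> (Ms ! t *\<^sub>v vs ! t) = w \<bullet> (Dji P Ns i t *\<^sub>v (Bb P Ns i t *\<^sub>v du t))"
      using t cD[of t] cB[OF t] by (simp add: Ms_def vs_def)
  qed
  finally have sum_eq: "w \<bullet> (hcat (nx P) Ms *\<^sub>v vstack vs) = (\<Sum>t<Ns i. w \<bullet> (Dji P Ns i t *\<^sub>v (Bb P Ns i t *\<^sub>v du t)))" .
  have "map dim_col Ms = map dim_vec vs"
    by (rule nth_equalityI) (use Mk len in \<open>auto dest: carrier_matD\<close>)
  moreover have "hcat (nx P) Ms \<in> carrier_mat (nx P) (sum_list (map dim_col Ms))"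
    by (rule hcat_carrier) (use Mk in \<open>metis carrier_matD(1) in_set_conv_nth\<close>)
  ultimately have "dim_vec (vstack vs) = dim_col (Sm P Ns i)"
    unfolding Sm_def Ms_def[symmetric] dim_vstack by (metis carrier_matD(2))
  then show ?thesis using Sw sum_eq unfolding Sm_def Ms_def[symmetric] by metis
qed

lemma block_dynamics_adjoint_pairing:
  assumes D: "split_data_dims P p Ns T" and i: "i \<le> p"
    and cD: "\<And>j. Dji P Ns i j \<in> carrier_mat (nx P) (nx P)"
    and dZ: "primal_dims P p Ns T dX dU dXb dDb" and w: "dim_vec w = nx P"
    and Sw: "\<And>v. dim_vec v = dim_col (Sm P Ns i) \<Longrightarrow> w \<bullet> (Sm P Ns i *\<^sub>v v) = 0"
  shows "(\<Sum>t<Ns i. ((Dji P Ns i t)\<^sup>T *\<^sub>v w) \<bullet> ((Ab P Ns i t *\<^sub>v dX t i + Bb P Ns i t *\<^sub>v dU t i) - dX (Suc t) i))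
       = w \<bullet> (calA P Ns i *\<^sub>v dX 0 i) - w \<bullet> dX (Ns i) i"
proof -
  have Ab: "\<And>t. t < Ns i \<Longrightarrow> Ab P Ns i t \<in> carrier_mat (nx P) (nx P)"
    and Bb: "\<And>t. t < Ns i \<Longrightarrow> Bb P Ns i t \<in> carrier_mat (nx P) (nub P Ns i t)"
    using D i unfolding split_data_dims_def by auto
  have dX: "\<And>t. t \<le> Ns i \<Longrightarrow> dim_vec (dX t i) = nx P"
    and dU: "\<And>t. t < Ns i \<Longrightarrow> dim_vec (dU t i) = nub P Ns i t"
    using dZ i unfolding primal_dims_def by auto
  have "(\<Sum>t<Ns i. ((Dji P Ns i t)\<^sup>T *\<^sub>v w) \<bullet> ((Ab P Ns i t *\<^sub>v dX t i + Bb P Ns i t *\<^sub>v dU t i) - dX (Suc t) i))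
      = w \<bullet> (calA P Ns i *\<^sub>v dX 0 i) - w \<bullet> dX (Ns i) i
        + (\<Sum>t<Ns i. w \<bullet> (Dji P Ns i t *\<^sub>v (Bb P Ns i t *\<^sub>v dU t i)))"
    unfolding Dji_def calA_def using Ab Bb dX dU w
    by (intro transition_defects_telescope) auto
  also have "(\<Sum>t<Ns i. w \<bullet> (Dji P Ns i t *\<^sub>v (Bb P Ns i t *\<^sub>v dU t i))) = 0"
    by (rule orthogonal_Sm_sum_eq_0[OF cD Bb dU w Sw])
  finally show ?thesis by simp
qed

text \<open>The left-hand side is the contribution of block \<open>i < p\<close> to \<open>LagE_lin\<close> for the
  multipliers shifted by \<open>Z\<^sub>i w\<close>; the terms added by the shift telescope to pairings of \<open>w\<close>
  with the ranges of \<open>T\<^sub>i\<close> and \<open>S\<^sub>i\<close>.\<close>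

lemma block_LagE_lin_multiplier_shift:
  assumes D: "split_data_dims P p Ns T" and i: "i < p"
    and cD: "\<And>j. Dji P Ns i j \<in> carrier_mat (nx P) (nx P)"
    and dZ: "primal_dims P p Ns T dX dU dXb dDb"
    and w: "dim_vec w = nx P" and g0: "dim_vec g0 = nx P"
    and gs: "\<And>j. j < Ns i \<Longrightarrow> dim_vec (G (Suc j)) = nx P" and gtc: "dim_vec gtc = nx P"
    and Tw: "\<And>v. dim_vec v = dim_col (T i) \<Longrightarrow> w \<bullet> (T i *\<^sub>v v) = 0"
    and Sw: "\<And>v. dim_vec v = dim_col (Sm P Ns i) \<Longrightarrow> w \<bullet> (Sm P Ns i *\<^sub>v v) = 0"
    and L0: "l0 = g0 - (calA P Ns i)\<^sup>T *\<^sub>v w"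
    and LS: "\<And>j. j < Ns i \<Longrightarrow> L (Suc j) = G (Suc j) - (Dji P Ns i j)\<^sup>T *\<^sub>v w"
    and Ltc: "ltc = gtc + w"
  shows "l0 \<bullet> (dXb i - dX 0 i)
       + (\<Sum>t<Ns i. L (Suc t) \<bullet> ((Ab P Ns i t *\<^sub>v dX t i + Bb P Ns i t *\<^sub>v dU t i) - dX (Suc t) i))
       + ltc \<bullet> ((calA P Ns i *\<^sub>v dXb i + T i *\<^sub>v dDb i) - dX (Ns i) i)
     = g0 \<bullet> (dXb i - dX 0 i)
       + (\<Sum>t<Ns i. G (Suc t) \<bullet> ((Ab P Ns i t *\<^sub>v dX t i + Bb P Ns i t *\<^sub>v dU t i) - dX (Suc t) i))
       + gtc \<bullet> ((calA P Ns i *\<^sub>v dXb i + T i *\<^sub>v dDb i) - dX (Ns i) i)"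
proof -
  let ?n = "nx P"
  let ?A = "calA P Ns i"
  note Dd = D[unfolded split_data_dims_def]
  note dZd = dZ[unfolded primal_dims_def]
  have cA: "?A \<in> carrier_mat ?n ?n" and cT: "T i \<in> carrier_mat ?n (dim_col (T i))" using Dd i by auto
  have dX: "\<And>t. t \<le> Ns i \<Longrightarrow> dim_vec (dX t i) = ?n"
    and dXb: "dim_vec (dXb i) = ?n" and dDb: "dim_vec (dDb i) = dim_col (T i)" using dZd i by auto
  define v0 where "v0 = dXb i - dX 0 i"
  define vN where "vN = (?A *\<^sub>v dXb i + T i *\<^sub>v dDb i) - dX (Ns i) i"
  define vt where "vt t = (Ab P Ns i t *\<^sub>v dX t i + Bb P Ns i t *\<^sub>v dU t i) - dX (Suc t) i" for t
  have dv0: "dim_vec v0 = ?n" and dvN: "dim_vec vN = ?n" and dvt: "\<And>t. t < Ns i \<Longrightarrow> dim_vec (vt t) = ?n"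
    unfolding v0_def vN_def vt_def using dX by auto
  have dAw: "dim_vec (?A\<^sup>T *\<^sub>v w) = ?n" and dDw: "\<And>j. dim_vec ((Dji P Ns i j)\<^sup>T *\<^sub>v w) = ?n"
    using cA cD by auto
  have "l0 \<bullet> v0 = g0 \<bullet> v0 - (?A\<^sup>T *\<^sub>v w) \<bullet> v0"
    unfolding L0 using g0 dAw dv0 by (intro minus_scalar_prod_distrib carrier_vecI)
  also have "(?A\<^sup>T *\<^sub>v w) \<bullet> v0 = w \<bullet> (?A *\<^sub>v v0)"
    using dv0 w by (intro transpose_vec_mult_scalar[OF cA] carrier_vecI)
  also have "?A *\<^sub>v v0 = ?A *\<^sub>v dXb i - ?A *\<^sub>v dX 0 i"
    unfolding v0_def using dXb dX[of 0] by (intro mult_minus_distrib_mat_vec[OF cA] carrier_vecI) auto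
  also have "w \<bullet> \<dots> = w \<bullet> (?A *\<^sub>v dXb i) - w \<bullet> (?A *\<^sub>v dX 0 i)"
    using w cA by (intro scalar_prod_minus_distrib carrier_vecI) auto
  finally have e0: "l0 \<bullet> v0 = g0 \<bullet> v0 - w \<bullet> (?A *\<^sub>v dXb i) + w \<bullet> (?A *\<^sub>v dX 0 i)" by simp
  have "(\<Sum>t<Ns i. L (Suc t) \<bullet> vt t) = (\<Sum>t<Ns i. G (Suc t) \<bullet> vt t - ((Dji P Ns i t)\<^sup>T *\<^sub>v w) \<bullet> vt t)"
    using LS gs dDw dvt by (intro sum.cong refl) (auto intro!: minus_scalar_prod_distrib carrier_vecI)
  then have es: "(\<Sum>t<Ns i. L (Suc t) \<bullet> vt t)
      = (\<Sum>t<Ns i. G (Suc t) \<bullet> vt t) - (\<Sum>t<Ns i. ((Dji P Ns i t)\<^sup>T *\<^sub>v w) \<bullet> vt t)"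
    by (simp add: sum_subtractf)
  have tel: "(\<Sum>t<Ns i. ((Dji P Ns i t)\<^sup>T *\<^sub>v w) \<bullet> vt t) = w \<bullet> (?A *\<^sub>v dX 0 i) - w \<bullet> dX (Ns i) i"
    unfolding vt_def using i by (intro block_dynamics_adjoint_pairing[OF D _ cD dZ w Sw]) simp
  have "ltc \<bullet> vN = gtc \<bullet> vN + w \<bullet> vN"
    unfolding Ltc using gtc w dvN by (intro add_scalar_prod_distrib carrier_vecI)
  also have "w \<bullet> vN = w \<bullet> (?A *\<^sub>v dXb i) + w \<bullet> (T i *\<^sub>v dDb i) - w \<bullet> dX (Ns i) i"
    unfolding vN_def using cA cT dX[of "Ns i"] w by (intro scalar_prod_add_diff_distrib) auto
  finally have eN: "ltc \<bullet> vN = gtc \<bullet> vN + w \<bullet> (?A *\<^sub>v dXb i) - w \<bullet> dX (Ns i) i"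
    using Tw[OF dDb] by simp
  show ?thesis
    using e0 es tel eN unfolding v0_def[symmetric] vN_def[symmetric] vt_def[symmetric] by linarith
qed

lemma stationaryE_multiplier_shift:
  assumes D: "split_data_dims P p Ns T" and Z: "primal_dims P p Ns T X U Xb Db"
    and LG: "dual_dims P p Ns Gam Gtc Lhat" and LL: "dual_dims P p Ns Lam Ltc Lhat"
    and St: "stationaryE P p Ns T X U Xb Db Gam Gtc Lhat"
    and lin: "\<And>dX dU dXb dDb. primal_dims P p Ns T dX dU dXb dDb \<Longrightarrow>
      LagE_lin P p Ns T dX dU dXb dDb Lam Ltc Lhat = LagE_lin P p Ns T dX dU dXb dDb Gam Gtc Lhat"
  shows "stationaryE P p Ns T X U Xb Db Lam Ltc Lhat"
  unfolding stationaryE_def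
proof (intro allI impI)
  fix dX dU dXb dDb assume dZ: "primal_dims P p Ns T dX dU dXb dDb"
  let ?shift = "\<lambda>Lam Ltc s. LagE P p Ns T (\<lambda>t i. X t i + s \<cdot>\<^sub>v dX t i) (\<lambda>t i. U t i + s \<cdot>\<^sub>v dU t i)
                           (\<lambda>i. Xb i + s \<cdot>\<^sub>v dXb i) (\<lambda>i. Db i + s \<cdot>\<^sub>v dDb i) Lam Ltc Lhat"
  let ?K = "LagE P p Ns T X U Xb Db Lam Ltc Lhat - LagE P p Ns T X U Xb Db Gam Gtc Lhat"
  have "(?shift Gam Gtc has_real_derivative 0) (at 0)" using St dZ unfolding stationaryE_def by blast
  then have "((\<lambda>s. ?shift Gam Gtc s + ?K) has_real_derivative 0) (at 0)"
    using DERIV_add[OF _ DERIV_const] by fastforce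
  moreover have "?shift Lam Ltc = (\<lambda>s. ?shift Gam Gtc s + ?K)"
    unfolding LagE_shift[OF D Z dZ LL] LagE_shift[OF D Z dZ LG] lin[OF dZ] by (simp add: algebra_simps)
  ultimately show "(?shift Lam Ltc has_real_derivative 0) (at 0)" by simp
qed

locale shifted_multipliers =
  fixes P :: mpc and p :: nat and Ns :: "nat \<Rightarrow> nat" and T :: "nat \<Rightarrow> real mat"
    and X U :: "nat \<Rightarrow> nat \<Rightarrow> real vec" and Xb Db :: "nat \<Rightarrow> real vec"
    and Gam :: "nat \<Rightarrow> nat \<Rightarrow> real vec" and Gtc Lhat :: "nat \<Rightarrow> real vec"
    and w :: "nat \<Rightarrow> real vec" and Lam :: "nat \<Rightarrow> nat \<Rightarrow> real vec" and Ltc :: "nat \<Rightarrow> real vec"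
  assumes standing: "mpc_standing P"
    and split: "valid_split P p Ns"
    and Tbasis: "\<forall>i<p. col_basis_of_range (T i) (Sm P Ns i)"
    and KKT: "KKT_E P p Ns T X U Xb Db Gam Gtc Lhat"
    and w_def: "\<forall>i<p. w i = - (Gtc i + Lhat (Suc i))"
    and Lam0_def: "\<forall>i<p. Lam 0 i = Gam 0 i - (calA P Ns i)\<^sup>T *\<^sub>v w i"
    and LamS_def: "\<forall>i<p. \<forall>j<Ns i. Lam (Suc j) i = Gam (Suc j) i - (Dji P Ns i j)\<^sup>T *\<^sub>v w i"
    and Lamp_def: "\<forall>k\<le>Ns p. Lam k p = Gam k p"
    and Ltc_def: "\<forall>i<p. Ltc i = Gtc i + w i"
begin

lemma data_wf: "mpc_wf P"
  using standing unfolding mpc_standing_def by simp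

lemma data_dims: "split_data_dims P p Ns T"
  using split_data_dimsI[OF data_wf split Tbasis] .

lemma primal_dims: "primal_dims P p Ns T X U Xb Db"
  and dual_dims_Gam: "dual_dims P p Ns Gam Gtc Lhat"
  and feasible: "feasibleE P p Ns T X U Xb Db"
  and stationary_Gam: "stationaryE P p Ns T X U Xb Db Gam Gtc Lhat"
  using KKT unfolding KKT_E_def by auto

lemma dim_Gam: "i \<le> p \<Longrightarrow> k \<le> Ns i \<Longrightarrow> dim_vec (Gam k i) = nx P"
  and dim_Gtc: "i < p \<Longrightarrow> dim_vec (Gtc i) = nx P"
  and dim_Lhat: "k \<le> p \<Longrightarrow> dim_vec (Lhat k) = nx P"
  using dual_dims_Gam unfolding dual_dims_def by blast+

lemma dim_w: "i < p \<Longrightarrow> dim_vec (w i) = nx P"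
  using w_def dim_Lhat by simp

lemma block_calA_carrier: "i < p \<Longrightarrow> calA P Ns i \<in> carrier_mat (nx P) (nx P)"
  using calA_carrier[OF data_wf split] by simp

lemma block_Dji_carrier: "i < p \<Longrightarrow> Dji P Ns i j \<in> carrier_mat (nx P) (nx P)"
  using Dji_carrier[OF data_wf split] by simp

lemma scalar_prod_w:
  assumes "i < p" "dim_vec v = nx P"
  shows "w i \<bullet> v = - (Gtc i \<bullet> v) - Lhat (Suc i) \<bullet> v"
  using w_def assms scalar_prod_uminus_add_left[OF dim_Gtc dim_Lhat] by simp

lemma w_orthogonal_T:
  assumes i: "i < p" and v: "dim_vec v = dim_col (T i)"
  shows "w i \<bullet> (T i *\<^sub>v v) = 0"
proof -
  have "T i \<in> carrier_mat (nx P) (dim_col (T i))" using data_dims i unfolding split_data_dims_def by blast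
  then have "dim_vec (T i *\<^sub>v v) = nx P" by simp
  then show ?thesis using stationary_wrt_Db[OF data_dims KKT i v] scalar_prod_w[OF i] by simp
qed

lemma w_orthogonal_Sm:
  assumes i: "i < p" and v: "dim_vec v = dim_col (Sm P Ns i)"
  shows "w i \<bullet> (Sm P Ns i *\<^sub>v v) = 0"
proof -
  have "Sm P Ns i *\<^sub>v v \<in> {Sm P Ns i *\<^sub>v v | v. dim_vec v = dim_col (Sm P Ns i)}" using v by blast
  also have "\<dots> = {T i *\<^sub>v v | v. dim_vec v = dim_col (T i)}"
  proof -
    have "col_basis_of_range (T i) (Sm P Ns i)" using Tbasis i by blast
    then show ?thesis unfolding col_basis_of_range_def by (elim conjE) (rule sym)
  qed
  finally obtain u where "Sm P Ns i *\<^sub>v v = T i *\<^sub>v u" "dim_vec u = dim_col (T i)" by blast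
  then show ?thesis using w_orthogonal_T[OF i] by simp
qed

lemma Sm_transpose_w:
  assumes i: "i < p"
  shows "(Sm P Ns i)\<^sup>T *\<^sub>v w i = 0\<^sub>v (dim_col (Sm P Ns i))"
proof (rule vec_eq_by_scalar_prod)
  show "dim_vec ((Sm P Ns i)\<^sup>T *\<^sub>v w i) = dim_col (Sm P Ns i)" by simp
  show "dim_vec (0\<^sub>v (dim_col (Sm P Ns i)) :: real vec) = dim_col (Sm P Ns i)" by simp
  fix d :: "real vec" assume d: "dim_vec d = dim_col (Sm P Ns i)"
  have "((Sm P Ns i)\<^sup>T *\<^sub>v w i) \<bullet> d = w i \<bullet> (Sm P Ns i *\<^sub>v d)"
    using i d dim_w[OF i]
    by (intro transpose_vec_mult_scalar[OF Sm_carrier[OF data_wf split]] carrier_vecI) auto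
  also have "\<dots> = 0" using w_orthogonal_Sm[OF i d] .
  finally show "((Sm P Ns i)\<^sup>T *\<^sub>v w i) \<bullet> d = 0\<^sub>v (dim_col (Sm P Ns i)) \<bullet> d"
    using d by (simp add: scalar_prod_def)
qed

lemma Ltc_eq: "i < p \<Longrightarrow> Ltc i = - Lhat (Suc i)"
  using Ltc_def w_def dim_Gtc[of i] dim_Lhat[of "Suc i"] by (intro eq_vecI) auto

lemma Lam_0_eq: 
  assumes i: "i < p"
  shows "Lam 0 i = Lhat i"
proof (rule vec_eq_by_scalar_prod)
  have cA: "calA P Ns i \<in> carrier_mat (nx P) (nx P)" using block_calA_carrier i .
  show "dim_vec (Lam 0 i) = nx P" using Lam0_def i cA by simp
  show "dim_vec (Lhat i) = nx P" using dim_Lhat i by simp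
  fix d :: "real vec" assume d: "dim_vec d = nx P"
  have dAd: "dim_vec (calA P Ns i *\<^sub>v d) = nx P" using cA by simp
  have "Lam 0 i \<bullet> d = Gam 0 i \<bullet> d - ((calA P Ns i)\<^sup>T *\<^sub>v w i) \<bullet> d"
    unfolding Lam0_def[rule_format, OF i] using dim_Gam[of i 0] cA d dim_w[OF i] i
    by (intro minus_scalar_prod_distrib carrier_vecI) auto
  also have "((calA P Ns i)\<^sup>T *\<^sub>v w i) \<bullet> d = w i \<bullet> (calA P Ns i *\<^sub>v d)"
    using d dim_w[OF i] by (intro transpose_vec_mult_scalar[OF cA] carrier_vecI)
  finally show "Lam 0 i \<bullet> d = Lhat i \<bullet> d"
    using stationary_wrt_Xb[OF data_dims KKT i d] scalar_prod_w[OF i dAd] by linarith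
qed

lemma Lam_Ns_eq:
  assumes i: "i < p"
  shows "Lam (Ns i) i = Lhat (Suc i)"
proof (rule vec_eq_by_scalar_prod)
  have N: "Ns i \<ge> 1" using split i unfolding valid_split_def by simp
  have Ns: "Ns i = Suc (Ns i - 1)" using N by simp
  have "Dji P Ns i (Ns i - 1) = 1\<^sub>m (nx P)" unfolding Dji_def using N by (simp add: mprod_empty)
  moreover have "w i \<in> carrier_vec (nx P)" using dim_w[OF i] by (rule carrier_vecI)
  ultimately have LN: "Lam (Ns i) i = Gam (Ns i) i - w i"
    using LamS_def i Ns by (metis lessI one_mult_mat_vec transpose_one)
  show "dim_vec (Lam (Ns i) i) = nx P" using LN dim_w[OF i] by simp
  show "dim_vec (Lhat (Suc i)) = nx P" using dim_Lhat i by simp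
  fix d :: "real vec" assume d: "dim_vec d = nx P"
  have "Lam (Ns i) i \<bullet> d = Gam (Ns i) i \<bullet> d - w i \<bullet> d"
    unfolding LN using dim_Gam[of i "Ns i"] dim_w[OF i] d i
    by (intro minus_scalar_prod_distrib carrier_vecI) auto
  then show "Lam (Ns i) i \<bullet> d = Lhat (Suc i) \<bullet> d"
    using stationary_wrt_terminal_state[OF data_dims KKT i N d] scalar_prod_w[OF i d] by linarith
qed

lemma dual_dims_Lam: "dual_dims P p Ns Lam Ltc Lhat"
  unfolding dual_dims_def
proof (intro conjI allI impI)
  fix i k assume i: "i \<le> p" and k: "k \<le> Ns i"
  show "dim_vec (Lam k i) = nx P"
  proof (cases "i = p")
    case True
    then show ?thesis using Lamp_def dim_Gam k by simp
  next
    case False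
    then have i': "i < p" using i by simp
    show ?thesis
      using Lam0_def LamS_def i' k carrier_matD[OF block_calA_carrier[OF i']] carrier_matD[OF block_Dji_carrier[OF i']]
      by (cases k) auto
  qed
qed (use Ltc_def dim_w dim_Lhat in auto)

lemma LagE_lin_Lam_eq:
  assumes dZ: "primal_dims P p Ns T dX dU dXb dDb"
  shows "LagE_lin P p Ns T dX dU dXb dDb Lam Ltc Lhat = LagE_lin P p Ns T dX dU dXb dDb Gam Gtc Lhat"
proof -
  define f where "f M i = M 0 i \<bullet> (dXb i - dX 0 i)
     + (\<Sum>t<Ns i. M (Suc t) i \<bullet> ((Ab P Ns i t *\<^sub>v dX t i + Bb P Ns i t *\<^sub>v dU t i) - dX (Suc t) i))"
    for M :: "nat \<Rightarrow> nat \<Rightarrow> real vec" and i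
  define c where "c V i = V i \<bullet> ((calA P Ns i *\<^sub>v dXb i + T i *\<^sub>v dDb i) - dX (Ns i) i)"
    for V :: "nat \<Rightarrow> real vec" and i
  have by_block: "(\<Sum>i\<le>p. M 0 i \<bullet> (dXb i - dX 0 i))
     + (\<Sum>i\<le>p. \<Sum>t<Ns i. M (Suc t) i \<bullet> ((Ab P Ns i t *\<^sub>v dX t i + Bb P Ns i t *\<^sub>v dU t i) - dX (Suc t) i))
     + (\<Sum>i<p. V i \<bullet> ((calA P Ns i *\<^sub>v dXb i + T i *\<^sub>v dDb i) - dX (Ns i) i))
     = (\<Sum>i<p. f M i + c V i) + f M p" for M V
    unfolding f_def c_def lessThan_Suc_atMost[symmetric] sum.lessThan_Suc sum.distrib by linarith
  have "f Lam i + c Ltc i = f Gam i + c Gtc i" if i: "i < p" for i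
    unfolding f_def c_def
    by (rule block_LagE_lin_multiplier_shift[OF data_dims i block_Dji_carrier[OF i] dZ dim_w[OF i]])
      (use i dim_Gam dim_Gtc w_orthogonal_T w_orthogonal_Sm Lam0_def LamS_def Ltc_def in auto)
  moreover have "f Lam p = f Gam p" unfolding f_def using Lamp_def by simp
  ultimately show ?thesis unfolding LagE_lin_def by_block by simp
qed

lemma KKT_Lam: "KKT_E P p Ns T X U Xb Db Lam Ltc Lhat"
  using primal_dims dual_dims_Lam feasible
    stationaryE_multiplier_shift[OF data_dims primal_dims dual_dims_Gam dual_dims_Lam stationary_Gam LagE_lin_Lam_eq]
  unfolding KKT_E_def by blast

end

theorem mainTheorem5:
  fixes P :: mpc and p :: nat and Ns :: "nat \<Rightarrow> nat" and T :: "nat \<Rightarrow> real mat"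
    and X U :: "nat \<Rightarrow> nat \<Rightarrow> real vec" and Xb Db :: "nat \<Rightarrow> real vec"
    and Gam :: "nat \<Rightarrow> nat \<Rightarrow> real vec" and Gtc Lhat :: "nat \<Rightarrow> real vec"
    and w :: "nat \<Rightarrow> real vec" and Lam :: "nat \<Rightarrow> nat \<Rightarrow> real vec" and Ltc :: "nat \<Rightarrow> real vec"
  assumes standing: "mpc_standing P"
    and split: "valid_split P p Ns"
    and Tbasis: "\<forall>i<p. col_basis_of_range (T i) (Sm P Ns i)"
    and KKT: "KKT_E P p Ns T X U Xb Db Gam Gtc Lhat"
    and w_def: "\<forall>i<p. w i = - (Gtc i + Lhat (Suc i))"
    and Lam0_def: "\<forall>i<p. Lam 0 i = Gam 0 i - (calA P Ns i)\<^sup>T *\<^sub>v w i"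
    and LamS_def: "\<forall>i<p. \<forall>j<Ns i. Lam (Suc j) i = Gam (Suc j) i - (Dji P Ns i j)\<^sup>T *\<^sub>v w i"
    and Lamp_def: "\<forall>k\<le>Ns p. Lam k p = Gam k p"
    and Ltc_def: "\<forall>i<p. Ltc i = Gtc i + w i"
  shows "(\<forall>i<p. (Sm P Ns i)\<^sup>T *\<^sub>v w i = 0\<^sub>v (dim_col (Sm P Ns i)))
       \<and> KKT_E P p Ns T X U Xb Db Lam Ltc Lhat
       \<and> (\<forall>i<p. Ltc i = - Lhat (Suc i) \<and> Lam 0 i = Lhat i \<and> Lam (Ns i) i = Lhat (Suc i))"
proof -
  interpret shifted_multipliers P p Ns T X U Xb Db Gam Gtc Lhat w Lam Ltc
    using assms by unfold_locales
  show ?thesis using Sm_transpose_w KKT_Lam Ltc_eq Lam_0_eq Lam_Ns_eq by blast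
qed

end
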